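(* Let $N\ge3$. Consider item types: type $(i,7)$ for $1\le i\le N$ with size $\frac1{7^i}$ and weight $\frac1{7^{i-1}}$, and types $j\in\{1,2,3\}$ with size $\frac1j$ and weight $2$. In the arrival order $(N,7),(N-1,7),\dots,(1,7),3,2,1$ (with $1$-items) and $(N,7),\dots,(1,7),3,2$ (without $1$-items), define: $W_i$ (resp. $V_i$) is the maximum total weight of a feasible bin using only items of types that arrive not earlier than type $(i,7)$ in the first (resp. second) order; $A_j$ (resp. $B_j$) is the maximum total weight of a feasible bin using only items of types arriving not earlier than type $j$ in the first (resp. second) order. Then $A_1=2$, $A_2=B_2=4$, $A_3=B_3=6$, and $W_k=V_k=9-\frac1{7^{k-1}}$ for every $1\le k\le N$.
   Context: A feasible bin is a finite multiset of items (each item of one of the listed types, arbitrary multiplicities) such that when the items are arranged according to the arrival order of their types, the total size of all items except the last one is strictly below $1$ (this is the Ordered Open End Bin Packing rule: an item may be added to a bin only while the bin's current total size is strictly below $1$). The weight of a bin is the sum of the weights of its items. Thus "types arriving not earlier than $(i,7)$" in the first order are $(i,7),(i-1,7),\dots,(1,7),3,2,1$, and in the second order $(i,7),\dots,(1,7),3,2$. *)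

theory Defs
  imports Main "HOL-Library.Multiset" Complex_Main
begin

text \<open>Item types: \<open>Seven i\<close> is type (i,7); \<open>Big j\<close> is type j (j in {1,2,3}).\<close>
datatype itype = Seven nat | Big nat

fun isize :: "itype \<Rightarrow> real" where
  "isize (Seven i) = 1 / 7 ^ i"
| "isize (Big j) = 1 / real j"

fun iweight :: "itype \<Rightarrow> real" where
  "iweight (Seven i) = 1 / 7 ^ (i - 1)"
| "iweight (Big j) = 2"

definition order1 :: "nat \<Rightarrow> itype list" where
  "order1 N = map Seven (rev [1..<N+1]) @ [Big 3, Big 2, Big 1]"

definition order2 :: "nat \<Rightarrow> itype list" where
  "order2 N = map Seven (rev [1..<N+1]) @ [Big 3, Big 2]"

definition arrange :: "itype list \<Rightarrow> itype multiset \<Rightarrow> itype list" where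
  "arrange ord B = concat (map (\<lambda>t. replicate (count B t) t) ord)"

text \<open>Ordered Open End feasibility: all items except the last have total size < 1.\<close>
definition feasible :: "itype list \<Rightarrow> itype multiset \<Rightarrow> bool" where
  "feasible ord B \<longleftrightarrow> set_mset B \<subseteq> set ord
     \<and> sum_list (map isize (butlast (arrange ord B))) < 1"

definition bin_weight :: "itype multiset \<Rightarrow> real" where
  "bin_weight B = (\<Sum>x\<in>#B. iweight x)"

definition not_earlier :: "itype list \<Rightarrow> itype \<Rightarrow> itype set" where
  "not_earlier ord t = set (dropWhile (\<lambda>s. s \<noteq> t) ord)"

definition max_weight :: "itype list \<Rightarrow> itype \<Rightarrow> real" where
  "max_weight ord t = Max {bin_weight B | B. feasible ord B \<and> set_mset B \<subseteq> not_earlier ord t}"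

definition W :: "nat \<Rightarrow> nat \<Rightarrow> real" where "W N i = max_weight (order1 N) (Seven i)"
definition V :: "nat \<Rightarrow> nat \<Rightarrow> real" where "V N i = max_weight (order2 N) (Seven i)"
definition A :: "nat \<Rightarrow> nat \<Rightarrow> real" where "A N j = max_weight (order1 N) (Big j)"
definition B :: "nat \<Rightarrow> nat \<Rightarrow> real" where "B N j = max_weight (order2 N) (Big j)"

end

theory Submission
  imports Defs
begin

(* Both arrival orders list the types by nondecreasing size, so the item a bin receives last is
   a largest one, and a nonempty bin is feasible exactly when its other items have total size
   below 1.

   For the types (i,7) the weight is seven times the size, and for i <= k their total size s is
   a multiple of 1/7^k.  If the items other than the last one are (i,7)-items of total size s
   together with n items of types 1, 2, 3, then s + n/3 < 1, and integrality sharpens this to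
   7s + 2n <= 7 - 1/7^(k-1); the last item weighs at most 2.  The resulting bound
   9 - 1/7^(k-1) is attained by 7^k - 1 items of type (k,7) followed by one item of type 2.
   If only the types 1, ..., j are allowed, fewer than j items fit before the last one, which
   gives 2j, attained by j items of type j. *)

definition bin_size :: "itype multiset \<Rightarrow> real" where
  "bin_size M = (\<Sum>x\<in>#M. isize x)"

definition size_ordered :: "itype list \<Rightarrow> bool" where
  "size_ordered ord \<longleftrightarrow>
     distinct ord \<and> sorted (map isize ord) \<and> (\<forall>t\<in>set ord. 0 < isize t)"

lemma bin_size_simps [simp]:
  "bin_size {#} = 0"
  "bin_size (add_mset x M) = isize x + bin_size M"
  "bin_size (M + M') = bin_size M + bin_size M'"
  "bin_size (replicate_mset n x) = n * isize x"
  by (simp_all add: bin_size_def)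

lemma bin_weight_simps [simp]:
  "bin_weight {#} = 0"
  "bin_weight (add_mset x M) = iweight x + bin_weight M"
  "bin_weight (M + M') = bin_weight M + bin_weight M'"
  "bin_weight (replicate_mset n x) = n * iweight x"
  by (simp_all add: bin_weight_def)

lemma iweight_le_2: "iweight t \<le> 2"
proof (cases t)
  case (Seven i)
  then have "iweight t \<le> 1"
    by simp
  then show ?thesis
    by simp
qed simp

lemma bin_weight_nonneg: "0 \<le> bin_weight M"
proof -
  have "0 \<le> iweight t" for t
    by (cases t) auto
  then show ?thesis
    by (induction M) auto
qed

section \<open>Feasibility for size-ordered arrival orders\<close>

lemma arrange_Cons: "arrange (t # ord) M = replicate (count M t) t @ arrange ord M"
  by (simp add: arrange_def)

lemma set_arrange: "set (arrange ord M) \<subseteq> set ord"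
  by (auto simp: arrange_def)

lemma mset_arrange_filter:
  "distinct ord \<Longrightarrow> mset (arrange ord M) = filter_mset (\<lambda>x. x \<in> set ord) M"
proof (induction ord)
  case Nil
  then show ?case by (simp add: arrange_def)
next
  case (Cons t ord)
  have "filter_mset (\<lambda>x. x \<in> set (t # ord)) M
      = filter_mset (\<lambda>x. x = t) M + filter_mset (\<lambda>x. x \<in> set ord) M"
    using Cons.prems by (intro multiset_eqI) auto
  with Cons show ?case
    by (simp add: arrange_Cons filter_eq_replicate_mset)
qed

lemma mset_arrange:
  "distinct ord \<Longrightarrow> set_mset M \<subseteq> set ord \<Longrightarrow> mset (arrange ord M) = M"
  by (auto simp: mset_arrange_filter filter_mset_eq_conv)

lemma sorted_arrange: "sorted (map isize ord) \<Longrightarrow> sorted (map isize (arrange ord M))"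
proof (induction ord)
  case Nil
  then show ?case by (simp add: arrange_def)
next
  case (Cons t ord)
  then show ?case
    using set_arrange[of ord M] by (auto simp: arrange_Cons sorted_append)
qed

lemma feasible_iff_rest_lt_1:
  assumes ord: "size_ordered ord" and M: "set_mset M \<subseteq> set ord"
    and L: "L \<in># M" "\<forall>x\<in>#M. isize x \<le> isize L"
  shows "feasible ord M \<longleftrightarrow> bin_size (M - {#L#}) < 1"
proof -
  define xs where "xs = arrange ord M"
  have mset_xs: "mset xs = M"
    using ord M by (simp add: xs_def size_ordered_def mset_arrange)
  then have "xs \<noteq> []"
    using L by auto
  then have xs: "xs = butlast xs @ [last xs]"
    by simp
  have "last xs \<in># M"
    using mset_xs \<open>xs \<noteq> []\<close> by (metis last_in_set set_mset_mset)
  have "sorted (map isize (butlast xs) @ [isize (last xs)])"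
    using ord sorted_arrange xs by (metis map_append list.map size_ordered_def xs_def)
  then have "\<forall>x\<in>set (butlast xs). isize x \<le> isize (last xs)"
    by (simp add: sorted_append)
  moreover have "set xs = insert (last xs) (set (butlast xs))"
    by (subst xs) simp
  ultimately have "isize L \<le> isize (last xs)"
    using L(1) mset_xs by auto
  then have last_size: "isize (last xs) = isize L"
    using L(2) \<open>last xs \<in># M\<close> by (simp add: order_antisym)
  have "bin_size M = sum_list (map isize xs)"
    unfolding bin_size_def mset_xs[symmetric] by (simp flip: mset_map add: sum_mset_sum_list)
  also have "\<dots> = sum_list (map isize (butlast xs)) + isize L"
    by (subst xs) (simp add: last_size)
  moreover have "bin_size M = isize L + bin_size (M - {#L#})"
    using L(1) by (metis insert_DiffM bin_size_simps(2))
  ultimately have "sum_list (map isize (butlast xs)) = bin_size (M - {#L#})"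
    by simp
  then show ?thesis
    using M by (simp add: feasible_def xs_def)
qed

lemma multiset_has_largest:
  fixes f :: "'a \<Rightarrow> 'b::linorder"
  assumes "M \<noteq> {#}"
  obtains L where "L \<in># M" "\<forall>x\<in>#M. f x \<le> f L"
proof -
  obtain L where "L \<in># M" "Max (f ` set_mset M) = f L"
    using obtains_MAX[of "set_mset M" f] assms by auto
  then show thesis
    using that by (metis Max_ge finite_imageI finite_set_mset imageI)
qed

lemma feasible_nonemptyE:
  assumes "size_ordered ord" "feasible ord M" "M \<noteq> {#}"
  obtains L R where "M = add_mset L R" "bin_size R < 1"
proof -
  obtain L where L: "L \<in># M" "\<forall>x\<in>#M. isize x \<le> isize L"
    using multiset_has_largest[OF assms(3)] by blast
  then have "bin_size (M - {#L#}) < 1"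
    using feasible_iff_rest_lt_1 assms(1,2) by (metis feasible_def)
  then show thesis
    using that L(1) by (metis insert_DiffM)
qed

lemma finite_feasible:
  assumes ord: "size_ordered ord"
  shows "finite {M. feasible ord M}"
proof -
  define d where "d = Min (insert 1 (isize ` set ord))"
  have d_pos: "0 < d"
    using ord by (simp add: d_def size_ordered_def)
  have d_le: "d \<le> isize t" if "t \<in> set ord" for t
    using that by (simp add: d_def)
  define n where "n = nat \<lceil>1 / d\<rceil> + 1"
  have "size M \<le> n" if feas: "feasible ord M" for M
  proof (cases "M = {#}")
    case False
    then obtain L R where M: "M = add_mset L R" and R: "bin_size R < 1"
      using feasible_nonemptyE ord feas by blast
    have "(\<Sum>x\<in>#R. d) \<le> bin_size R"
      unfolding bin_size_def
      by (rule sum_mset_mono) (use feas M d_le in \<open>auto simp: feasible_def\<close>)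
    then have "real (size R) < 1 / d"
      using R d_pos by (simp add: field_simps)
    then show ?thesis
      using M by (simp add: n_def) linarith
  qed simp
  then have "{M. feasible ord M} \<subseteq> (\<Union>m\<le>n. multisets_of_size (set ord) m)"
    by (auto simp: multisets_of_size_def feasible_def)
  then show ?thesis
    by (rule finite_subset) auto
qed

lemma not_earlier_subset: "not_earlier ord t \<subseteq> set ord"
  by (auto simp: not_earlier_def dest: set_dropWhileD)

lemma self_in_not_earlier: "t \<in> set ord \<Longrightarrow> t \<in> not_earlier ord t"
  by (induction ord) (auto simp: not_earlier_def)

lemma not_earlier_append: "t \<notin> set xs \<Longrightarrow> not_earlier (xs @ ys) t = not_earlier ys t"
  unfolding not_earlier_def by (subst dropWhile_append2) auto

lemma max_weight_eqI:
  assumes ord: "size_ordered ord"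
    and witness: "feasible ord M0" "set_mset M0 \<subseteq> not_earlier ord t" "bin_weight M0 = w"
    and bound: "\<And>L R. set_mset (add_mset L R) \<subseteq> not_earlier ord t \<Longrightarrow> bin_size R < 1
      \<Longrightarrow> bin_weight (add_mset L R) \<le> w"
  shows "max_weight ord t = w"
  unfolding max_weight_def
proof (rule Max_eqI)
  have "{bin_weight M |M. feasible ord M \<and> set_mset M \<subseteq> not_earlier ord t}
      \<subseteq> bin_weight ` {M. feasible ord M}"
    by auto
  then show "finite {bin_weight M |M. feasible ord M \<and> set_mset M \<subseteq> not_earlier ord t}"
    using finite_feasible[OF ord] finite_surj by blast
  show "w \<in> {bin_weight M |M. feasible ord M \<and> set_mset M \<subseteq> not_earlier ord t}"
    using witness by auto
next
  fix y assume "y \<in> {bin_weight M |M. feasible ord M \<and> set_mset M \<subseteq> not_earlier ord t}"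
  then obtain M where y: "y = bin_weight M" and M: "feasible ord M" "set_mset M \<subseteq> not_earlier ord t"
    by auto
  show "y \<le> w"
  proof (cases "M = {#}")
    case True
    then show ?thesis
      using y witness(3) bin_weight_nonneg[of M0] by simp
  next
    case False
    then obtain L R where "M = add_mset L R" "bin_size R < 1"
      using feasible_nonemptyE ord M(1) by blast
    then show ?thesis
      using bound M(2) y by blast
  qed
qed

section \<open>Weight bounds\<close>

lemma bin_weight_Sevens:
  "set_mset S \<subseteq> Seven ` {1..} \<Longrightarrow> bin_weight S = 7 * bin_size S"
proof (induction S)
  case (add x S)
  then obtain i where "x = Seven i" "1 \<le> i"
    by auto
  then have "iweight x = 7 * isize x"
    by (cases i) auto
  with add show ?case
    by (simp add: algebra_simps)
qed simp

lemma bin_weight_Bigs: "set_mset G \<subseteq> range Big \<Longrightarrow> bin_weight G = 2 * size G"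
  by (induction G) auto

lemma bin_size_Bigs_ge:
  "set_mset G \<subseteq> Big ` {1..c} \<Longrightarrow> size G / c \<le> bin_size G"
proof (induction G)
  case (add x G)
  then obtain j where "x = Big j" "1 \<le> j" "j \<le> c"
    by auto
  then have "1 / c \<le> isize x"
    by (simp add: frac_le)
  with add show ?case
    by (simp add: add_divide_distrib)
qed simp

lemma scaled_bin_size_Sevens:
  "set_mset S \<subseteq> Seven ` {..k} \<Longrightarrow> \<exists>m::nat. 7 ^ k * bin_size S = m"
proof (induction S)
  case (add x S)
  then obtain i where "x = Seven i" "i \<le> k"
    by auto
  then have "7 ^ k * isize x = 7 ^ (k - i)"
    by (simp add: power_diff)
  moreover obtain m :: nat where "7 ^ k * bin_size S = m"
    using add by auto
  ultimately have "7 ^ k * bin_size (add_mset x S) = m + 7 ^ (k - i)"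
    by (simp add: algebra_simps)
  then show ?case
    by (metis of_nat_add of_nat_numeral of_nat_power)
qed simp

(* Applied with P = 7^k, m = 7^k times the total size of the (i,7)-items and n the number of
   items of types 1, 2, 3.  Divisibility by 7 matters for n = 1: the bound fails for 7 < P < 14. *)
lemma seven_dvd_weight_bound_nat:
  fixes m n P :: nat
  assumes "7 dvd P" "3 * m + n * P < 3 * P"
  shows "7 * m + 2 * n * P + 7 \<le> 7 * P"
proof -
  obtain q where P: "P = 7 * q"
    using assms(1) ..
  have "n * P < 3 * P"
    using assms(2) by linarith
  then consider "n = 0" | "n = 1" | "n = 2"
    by fastforce
  then show ?thesis
  proof cases
    case 1
    then show ?thesis
      using assms(2) by simp
  next
    case 2
    then have "3 * m < 14 * q"
      using assms(2) P by simp
    then have "m < 5 * q"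
      by linarith
    then show ?thesis
      using 2 P by simp
  next
    case 3
    then have "3 * m < 7 * q"
      using assms(2) P by simp
    then have "m < 3 * q"
      by linarith
    then show ?thesis
      using 3 P by simp
  qed
qed

lemma seven_dvd_weight_bound:
  fixes s :: real and m n k :: nat
  assumes k: "1 \<le> k" and s: "7 ^ k * s = m" and fits: "s + n / 3 < 1"
  shows "7 * s + 2 * n \<le> 7 - 1 / 7 ^ (k - 1)"
proof -
  define P :: nat where "P = 7 ^ k"
  have P_pos: "0 < real P"
    by (simp add: P_def)
  have s_eq: "s = m / P"
    using s P_pos by (simp add: P_def field_simps)
  have "real (3 * m + n * P) < real (3 * P)"
    using fits s_eq P_pos by (simp add: field_simps)
  then have "3 * m + n * P < 3 * P"
    by (simp only: of_nat_less_iff)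
  moreover have "7 dvd P"
    using k by (simp add: P_def dvd_power)
  ultimately have "7 * m + 2 * n * P + 7 \<le> 7 * P"
    using seven_dvd_weight_bound_nat by blast
  then have "real (7 * m + 2 * n * P + 7) \<le> real (7 * P)"
    by (simp only: of_nat_le_iff)
  then have "7 * s + 2 * n \<le> 7 - 7 / P"
    using s_eq P_pos by (simp add: field_simps)
  moreover have "7 / real P = 1 / 7 ^ (k - 1)"
    using k by (cases k) (simp_all add: P_def)
  ultimately show ?thesis
    by simp
qed

lemma bin_weight_le_if_bin_size_lt_1:
  assumes k: "1 \<le> k" and R: "set_mset R \<subseteq> Seven ` {1..k} \<union> Big ` {1..3}" "bin_size R < 1"
  shows "bin_weight R \<le> 7 - 1 / 7 ^ (k - 1)"
proof -
  define S where "S = filter_mset (\<lambda>x. x \<in> range Seven) R"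
  define G where "G = filter_mset (\<lambda>x. x \<notin> range Seven) R"
  have R_split: "R = S + G"
    by (simp add: S_def G_def multiset_partition[symmetric])
  have S: "set_mset S \<subseteq> Seven ` {1..k}" and G: "set_mset G \<subseteq> Big ` {1..3}"
    using R(1) by (auto simp: S_def G_def)
  have "set_mset S \<subseteq> Seven ` {..k}"
    using S by auto
  then obtain m :: nat where m: "7 ^ k * bin_size S = m"
    using scaled_bin_size_Sevens by blast
  have "bin_size S + size G / 3 < 1"
    using bin_size_Bigs_ge[OF G] R(2) R_split by simp
  then have "7 * bin_size S + 2 * size G \<le> 7 - 1 / 7 ^ (k - 1)"
    using seven_dvd_weight_bound[OF k m] by blast
  moreover have "bin_weight S = 7 * bin_size S"
    using S by (intro bin_weight_Sevens) auto
  moreover have "bin_weight G = 2 * size G"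
    using G by (intro bin_weight_Bigs) auto
  ultimately show ?thesis
    using R_split by simp
qed

lemma size_lt_if_bin_size_lt_1:
  assumes "0 < c" "set_mset R \<subseteq> Big ` {1..c}" "bin_size R < 1"
  shows "size R < c"
proof -
  have "real (size R) \<le> bin_size R * c"
    using bin_size_Bigs_ge[OF assms(2)] assms(1) by (simp add: field_simps)
  also have "\<dots> < c"
    using assms(1,3) by simp
  finally show ?thesis
    by simp
qed

section \<open>The two arrival orders\<close>

lemma not_earlier_Sevens:
  assumes "1 \<le> k" "k \<le> N"
  shows "not_earlier (map Seven (rev [1..<N+1]) @ ys) (Seven k) = Seven ` {1..k} \<union> set ys"
  using assms(2)
proof (induction N rule: dec_induct)
  case base
  have "Seven ` {1..k} = insert (Seven k) (Seven ` {1..<k})"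
    using assms(1) by (auto simp: image_iff)
  with assms(1) show ?case
    by (simp add: not_earlier_def)
next
  case (step n)
  then show ?case
    by (simp add: not_earlier_def)
qed

lemma sorted_sizes_Sevens: "sorted (map isize (map Seven (rev [1..<N+1])))"
proof -
  have "sorted_wrt (\<lambda>i j. isize (Seven j) \<le> isize (Seven i)) [1..<N+1]"
    by (rule sorted_wrt_mono_rel[OF _ sorted_wrt_upt]) (simp add: frac_le)
  then show ?thesis
    by (simp add: rev_map[symmetric] sorted_wrt_rev sorted_wrt_map del: upt_Suc)
qed

lemma isize_Seven_le: "1 \<le> i \<Longrightarrow> isize (Seven i) \<le> 1 / 7"
proof -
  assume "1 \<le> i"
  then have "(7::real) ^ 1 \<le> 7 ^ i"
    by (intro power_increasing) auto
  then show ?thesis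
    by (simp add: frac_le)
qed

lemma size_ordered_order1: "size_ordered (order1 N)"
proof -
  have "distinct (order1 N)"
    by (auto simp: order1_def distinct_map inj_on_def simp del: upt_Suc)
  moreover have "\<forall>t\<in>set (order1 N). 0 < isize t"
    by (auto simp: order1_def)
  moreover have "sorted (map isize (order1 N))"
  proof -
    have "\<forall>s\<in>set (map isize (map Seven (rev [1..<N+1]))). s \<le> 1 / 7"
      using isize_Seven_le by (auto simp del: upt_Suc)
    then show ?thesis
      using sorted_sizes_Sevens[of N] unfolding order1_def map_append sorted_append
      by (auto simp del: upt_Suc)
  qed
  ultimately show ?thesis
    by (simp add: size_ordered_def)
qed

lemma size_ordered_order2: "size_ordered (order2 N)"
proof -
  have "order1 N = order2 N @ [Big 1]"
    by (simp add: order1_def order2_def)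
  then show ?thesis
    using size_ordered_order1[of N] by (simp add: size_ordered_def sorted_append)
qed

lemma not_earlier_order_Seven:
  assumes "1 \<le> k" "k \<le> N"
  shows "not_earlier (order1 N) (Seven k) = Seven ` {1..k} \<union> {Big 3, Big 2, Big 1}"
    and "not_earlier (order2 N) (Seven k) = Seven ` {1..k} \<union> {Big 3, Big 2}"
  unfolding order1_def order2_def by (simp_all only: not_earlier_Sevens[OF assms] list.set)

lemma not_earlier_order1_Big:
  "j \<in> {1, 2, 3} \<Longrightarrow> not_earlier (order1 N) (Big j) = Big ` {1..j}"
  unfolding order1_def by (subst not_earlier_append) (auto simp: not_earlier_def)

lemma not_earlier_order2_Big:
  "j \<in> {2, 3} \<Longrightarrow> not_earlier (order2 N) (Big j) = Big ` {2..j}"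
  unfolding order2_def by (subst not_earlier_append) (auto simp: not_earlier_def)

lemma max_weight_Big:
  assumes ord: "size_ordered ord" and "Big j \<in> set ord"
    and types: "not_earlier ord (Big j) \<subseteq> Big ` {1..j}"
  shows "max_weight ord (Big j) = 2 * j"
proof -
  have Big_j: "Big j \<in> not_earlier ord (Big j)"
    using assms(2) by (rule self_in_not_earlier)
  then have "1 \<le> j"
    using types by auto
  define M0 where "M0 = add_mset (Big j) (replicate_mset (j - 1) (Big j))"
  show ?thesis
  proof (rule max_weight_eqI[OF ord])
    show M0_types: "set_mset M0 \<subseteq> not_earlier ord (Big j)"
      using Big_j by (simp add: M0_def)
    have "bin_size (replicate_mset (j - 1) (Big j)) < 1"
      using \<open>1 \<le> j\<close> by (simp add: of_nat_diff field_simps)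
    then show "feasible ord M0"
      using M0_types not_earlier_subset[of ord "Big j"]
      by (subst feasible_iff_rest_lt_1[OF ord, of _ "Big j"]) (auto simp: M0_def)
    show "bin_weight M0 = 2 * j"
      using \<open>1 \<le> j\<close> by (simp add: M0_def of_nat_diff)
  next
    fix L R
    assume LR: "set_mset (add_mset L R) \<subseteq> not_earlier ord (Big j)" and "bin_size R < 1"
    then have "size R < j"
      using types \<open>1 \<le> j\<close> by (intro size_lt_if_bin_size_lt_1) auto
    moreover have "bin_weight (add_mset L R) = 2 * size (add_mset L R)"
      using LR types by (intro bin_weight_Bigs) auto
    ultimately show "bin_weight (add_mset L R) \<le> 2 * j"
      by simp
  qed
qed

lemma max_weight_Seven:
  assumes ord: "ord \<in> {order1 N, order2 N}" and k: "1 \<le> k" "k \<le> N"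
  shows "max_weight ord (Seven k) = 9 - 1 / 7 ^ (k - 1)"
proof -
  have "size_ordered ord"
    using ord size_ordered_order1 size_ordered_order2 by blast
  have types: "Seven ` {1..k} \<union> {Big 2} \<subseteq> not_earlier ord (Seven k)"
    "not_earlier ord (Seven k) \<subseteq> Seven ` {1..k} \<union> Big ` {1..3}"
    using ord k by (auto simp: not_earlier_order_Seven)
  define M0 where "M0 = add_mset (Big 2) (replicate_mset (7 ^ k - 1) (Seven k))"
  have pow: "(7::real) ^ k = 7 * 7 ^ (k - 1)"
    using k(1) by (cases k) auto
  show ?thesis
  proof (rule max_weight_eqI[OF \<open>size_ordered ord\<close>])
    show M0_types: "set_mset M0 \<subseteq> not_earlier ord (Seven k)"
      using types(1) k(1) by (auto simp: M0_def)
    have "bin_size (replicate_mset (7 ^ k - 1) (Seven k)) < 1"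
      by (simp add: of_nat_diff field_simps)
    moreover have "isize (Seven k) \<le> isize (Big 2)"
      using isize_Seven_le[OF k(1)] by simp
    ultimately show "feasible ord M0"
      using M0_types not_earlier_subset[of ord "Seven k"]
      by (subst feasible_iff_rest_lt_1[OF \<open>size_ordered ord\<close>, of _ "Big 2"]) (auto simp: M0_def)
    show "bin_weight M0 = 9 - 1 / 7 ^ (k - 1)"
      by (simp add: M0_def of_nat_diff pow field_simps)
  next
    fix L R
    assume "set_mset (add_mset L R) \<subseteq> not_earlier ord (Seven k)" and "bin_size R < 1"
    then have "bin_weight R \<le> 7 - 1 / 7 ^ (k - 1)"
      using types(2) k(1) by (intro bin_weight_le_if_bin_size_lt_1) auto
    then show "bin_weight (add_mset L R) \<le> 9 - 1 / 7 ^ (k - 1)"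
      using iweight_le_2[of L] by simp
  qed
qed

theorem mainTheorem12:
  fixes N :: nat
  assumes "N \<ge> 3"
  shows "A N 1 = 2 \<and> A N 2 = 4 \<and> B N 2 = 4 \<and> A N 3 = 6 \<and> B N 3 = 6 \<and>
         (\<forall>k. 1 \<le> k \<and> k \<le> N \<longrightarrow>
            W N k = 9 - 1 / 7 ^ (k - 1) \<and> V N k = 9 - 1 / 7 ^ (k - 1))"
proof -
  have A: "A N j = 2 * j" if "j \<in> {1, 2, 3}" for j
  proof -
    have "Big j \<in> set (order1 N)"
      using that by (auto simp: order1_def)
    then show ?thesis
      unfolding A_def using that
      by (intro max_weight_Big size_ordered_order1) (auto simp: not_earlier_order1_Big)
  qed
  have B: "B N j = 2 * j" if "j \<in> {2, 3}" for j
  proof -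
    have "Big j \<in> set (order2 N)"
      using that by (auto simp: order2_def)
    then show ?thesis
      unfolding B_def using that
      by (intro max_weight_Big size_ordered_order2) (auto simp: not_earlier_order2_Big)
  qed
  have "W N k = 9 - 1 / 7 ^ (k - 1) \<and> V N k = 9 - 1 / 7 ^ (k - 1)" if "1 \<le> k" "k \<le> N" for k
    using max_weight_Seven[OF _ that] by (simp add: W_def V_def)
  then show ?thesis
    using A B by simp
qed

end
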